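(* Consider a $B$-restrained congestion game with $n$ players, $m$ resources and maximum strategy-set size $k=\max_i|\Sigma_i|$, under any of the three smoothed models below, with density bound $\phi$. Then the expected value of the maximum number of better-response steps (maximum over all starting strategy profiles and all sequences of better-responses) until a pure Nash equilibrium is reached is bounded by (i) $O(n^{B+3}k^2m^2\phi)$ for general latencies; (ii) $O(n^{B+d+2}\log(n)(d+1)^3k^2m^2\phi)$ for polynomial latencies of degree at most $d$; (iii) $O((d+1)^{B+2}n^2\log(n)k^2m^2\phi)$ for step-function latencies with at most $d$ break-points per resource.
   Context: A congestion game has players $\mathcal N=[n]$, a finite resource set $\mathcal R$, strategy sets $\Sigma_i\subseteq 2^{\mathcal R}$, and latency functions $\kappa_r:[n]\to\mathbb R_{\ge0}$. For a profile $\sigma=(\sigma_1,\dots,\sigma_n)$ the load is $\ell_r(\sigma)=|\{i:r\in\sigma_i\}|$ and player $i$'s cost is $C_i(\sigma)=\sum_{r\in\sigma_i}\kappa_r(\ell_r(\sigma))$. A pure Nash equilibrium (PNE) is a profile from which no player can strictly lower her cost by unilaterally changing strategy; a better-response step is a unilateral change $\sigma_i\to\sigma_i'$ with $C_i(\sigma_i',\sigma_{-i})<C_i(\sigma)$. The game is $B$-restrained if $|\sigma\,\triangle\,\sigma'|\le B$ for every player $i$ and all $\sigma,\sigma'\in\Sigma_i$. Latency models: general — $\kappa_r(\ell)$ given explicitly for each $\ell\in[n]$; polynomial — $\kappa_r(\ell)=\sum_{j=0}^{d_r}\alpha_{r,j}\ell^j$ with $d_r\le d$ and $\alpha_{r,j}\ge0$;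 step-function — for a fixed set of break-points $\mathcal B_r\subseteq[n]$ with $|\mathcal B_r|\le d$, $\kappa_r(\ell)=\sum_{j\in\mathcal B_r\cap[\ell]}\alpha_{r,j}$. Smoothed models: in the general model the values $\kappa_r(\ell)$, in the polynomial model the coefficients $\alpha_{r,j}$, and in the step-function model the jumps $\alpha_{r,j}$ ($j\in\mathcal B_r$; break-points themselves are fixed and adversarial), are drawn independently from distributions with densities $[0,1]\to[0,\phi]$. *)

theory Defs
  imports "HOL-Probability.Probability"
begin

text \<open>Players are 0,...,n-1; resources are natural numbers (a finite set R);
  a strategy profile is a function sigma :: nat => nat set (only values at i < n matter);
  latencies kappa :: resource => load => real.\<close>

definition load :: "nat \<Rightarrow> (nat \<Rightarrow> nat set) \<Rightarrow> nat \<Rightarrow> nat" where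
  "load n \<sigma> r = card {i. i < n \<and> r \<in> \<sigma> i}"

definition cost :: "nat \<Rightarrow> (nat \<Rightarrow> nat \<Rightarrow> real) \<Rightarrow> (nat \<Rightarrow> nat set) \<Rightarrow> nat \<Rightarrow> real" where
  "cost n \<kappa> \<sigma> i = (\<Sum>r\<in>\<sigma> i. \<kappa> r (load n \<sigma> r))"

definition congestion_game :: "nat \<Rightarrow> nat set \<Rightarrow> (nat \<Rightarrow> nat set set) \<Rightarrow> bool" where
  "congestion_game n R \<Sigma> \<longleftrightarrow> finite R \<and> (\<forall>i<n. \<Sigma> i \<noteq> {} \<and> \<Sigma> i \<subseteq> Pow R)"

definition is_profile :: "nat \<Rightarrow> (nat \<Rightarrow> nat set set) \<Rightarrow> (nat \<Rightarrow> nat set) \<Rightarrow> bool" where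
  "is_profile n \<Sigma> \<sigma> \<longleftrightarrow> (\<forall>i<n. \<sigma> i \<in> \<Sigma> i)"

definition better_response_step ::
  "nat \<Rightarrow> (nat \<Rightarrow> nat set set) \<Rightarrow> (nat \<Rightarrow> nat \<Rightarrow> real) \<Rightarrow> (nat \<Rightarrow> nat set) \<Rightarrow> (nat \<Rightarrow> nat set) \<Rightarrow> bool" where
  "better_response_step n \<Sigma> \<kappa> \<sigma> \<sigma>' \<longleftrightarrow>
     (\<exists>i<n. \<exists>s\<in>\<Sigma> i. \<sigma>' = \<sigma>(i := s) \<and> cost n \<kappa> \<sigma>' i < cost n \<kappa> \<sigma> i)"

definition max_br_steps :: "nat \<Rightarrow> (nat \<Rightarrow> nat set set) \<Rightarrow> (nat \<Rightarrow> nat \<Rightarrow> real) \<Rightarrow> ennreal" where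
  "max_br_steps n \<Sigma> \<kappa> =
     (SUP L \<in> {L. \<exists>p. is_profile n \<Sigma> (p 0) \<and>
                      (\<forall>t<L. better_response_step n \<Sigma> \<kappa> (p t) (p (Suc t)))}. of_nat L)"

definition restrained :: "nat \<Rightarrow> (nat \<Rightarrow> nat set set) \<Rightarrow> nat \<Rightarrow> bool" where
  "restrained n \<Sigma> B \<longleftrightarrow> (\<forall>i<n. \<forall>s\<in>\<Sigma> i. \<forall>s'\<in>\<Sigma> i. card ((s - s') \<union> (s' - s)) \<le> B)"

definition max_strat :: "nat \<Rightarrow> (nat \<Rightarrow> nat set set) \<Rightarrow> nat" where
  "max_strat n \<Sigma> = Max (insert 0 {card (\<Sigma> i) | i. i < n})"

definition smoothing_density :: "real \<Rightarrow> (real \<Rightarrow> real) \<Rightarrow> bool" where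
  "smoothing_density \<phi> f \<longleftrightarrow> f \<in> borel_measurable lborel \<and>
     (\<forall>x. 0 \<le> f x \<and> f x \<le> \<phi>) \<and> (\<forall>x. x \<notin> {0..1} \<longrightarrow> f x = 0) \<and>
     (\<integral>\<^sup>+x. ennreal (f x) \<partial>lborel) = 1"

definition param_space :: "(nat \<times> nat) set \<Rightarrow> (nat \<times> nat \<Rightarrow> real \<Rightarrow> real) \<Rightarrow> (nat \<times> nat \<Rightarrow> real) measure" where
  "param_space I f = PiM I (\<lambda>i. density lborel (\<lambda>x. ennreal (f i x)))"

definition gen_lat :: "(nat \<times> nat \<Rightarrow> real) \<Rightarrow> nat \<Rightarrow> nat \<Rightarrow> real" where
  "gen_lat x r l = x (r, l)"

definition poly_lat :: "(nat \<Rightarrow> nat) \<Rightarrow> (nat \<times> nat \<Rightarrow> real) \<Rightarrow> nat \<Rightarrow> nat \<Rightarrow> real" where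
  "poly_lat dg x r l = (\<Sum>j\<le>dg r. x (r, j) * real l ^ j)"

definition step_lat :: "(nat \<Rightarrow> nat set) \<Rightarrow> (nat \<times> nat \<Rightarrow> real) \<Rightarrow> nat \<Rightarrow> nat \<Rightarrow> real" where
  "step_lat Bp x r l = (\<Sum>j\<in>{j\<in>Bp r. j \<le> l}. x (r, j))"

end

theory Submission
  imports Defs "HOL-Analysis.Harmonic_Numbers"
begin

text \<open>Every better-response step lowers Rosenthal's potential by exactly the improvement of
  the deviating player, and the potential lies in \<open>[0, m n L]\<close> when all latencies lie in
  \<open>[0, L]\<close>. Hence a run of at least \<open>t\<close> steps contains a step whose improvement lies in
  \<open>(0, m n L / t]\<close>, and no run is longer than the number \<open>(n + 1)\<^sup>m\<close> of load vectors,
  so the expected maximal run length is at most the sum over \<open>t \<le> (n + 1)\<^sup>m\<close> of the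
  probabilities that some improvement falls into \<open>(0, m n L / t]\<close>.
  For a fixed player, pair of strategies and loads on the at most \<open>B\<close> changed resources, the
  improvement is \<open>\<plusminus>\<close> one random parameter plus a term independent of it, so it falls into
  \<open>(0, \<epsilon>]\<close> with probability at most \<open>\<phi> \<epsilon>\<close>. A union bound over \<open>n k\<^sup>2 |V|\<^sup>B\<close>
  such events and the harmonic sum \<open>\<Sum>t\<le>T. 1/t \<le> 1 + ln T\<close> give the bound.
  The three latency models differ only in the latency bound \<open>L\<close>, in the number \<open>|V|\<close> of
  load levels that latencies can distinguish (\<open>n\<close>, \<open>n\<close> and \<open>d + 1\<close>), and in the
  parameter occurring with coefficient one (the value itself, the constant coefficient,
  or any jump that is already active).\<close>

section \<open>Rosenthal's potential\<close>

definition entry_load :: "nat \<Rightarrow> (nat \<Rightarrow> nat set) \<Rightarrow> nat \<Rightarrow> nat \<Rightarrow> nat" where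
  "entry_load n \<sigma> i r = load n (\<sigma>(i := {})) r + 1"

definition improvement :: "(nat \<Rightarrow> nat \<Rightarrow> real) \<Rightarrow> nat set \<Rightarrow> nat set \<Rightarrow> (nat \<Rightarrow> nat) \<Rightarrow> real" where
  "improvement \<kappa> s s' ld = (\<Sum>r\<in>s - s'. \<kappa> r (ld r)) - (\<Sum>r\<in>s' - s. \<kappa> r (ld r))"

definition rosenthal_potential :: "nat \<Rightarrow> (nat \<Rightarrow> nat \<Rightarrow> real) \<Rightarrow> nat set \<Rightarrow> (nat \<Rightarrow> nat set) \<Rightarrow> real" where
  "rosenthal_potential n \<kappa> R \<sigma> = (\<Sum>r\<in>R. \<Sum>l=1..load n \<sigma> r. \<kappa> r l)"

lemma load_eq_load_fun_upd_empty:
  assumes "i < n"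
  shows "load n \<sigma> r = load n (\<sigma>(i := {})) r + (if r \<in> \<sigma> i then 1 else 0)"
proof -
  have "{j. j < n \<and> r \<in> \<sigma> j} = {j. j < n \<and> r \<in> (\<sigma>(i := {})) j} \<union> (if r \<in> \<sigma> i then {i} else {})"
    using assms by auto
  then show ?thesis unfolding load_def by (auto simp: card_insert_if)
qed

lemma load_le: "load n \<sigma> r \<le> n"
  unfolding load_def by (rule order_trans[OF card_mono card_lessThan[THEN eq_imp_le]]) auto

lemma entry_load_le:
  assumes "i < n"
  shows "entry_load n \<sigma> i r \<le> n"
proof -
  have "load n (\<sigma>(i := {})) r \<le> card ({..<n} - {i})"
    unfolding load_def by (intro card_mono) auto
  then show ?thesis using assms unfolding entry_load_def by simp
qed

lemma cost_fun_upd_eq: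
  assumes "i < n"
  shows "cost n \<kappa> (\<sigma>(i := s)) i = (\<Sum>r\<in>s. \<kappa> r (entry_load n \<sigma> i r))"
  unfolding cost_def entry_load_def
  using load_eq_load_fun_upd_empty[OF assms, of "\<sigma>(i := s)"] by (intro sum.cong) auto

lemma sum_diff_eq_sum_Diff:
  fixes g :: "'a \<Rightarrow> 'b::ab_group_add"
  assumes "finite s" "finite s'"
  shows "sum g s - sum g s' = sum g (s - s') - sum g (s' - s)"
  using sum.Int_Diff[OF assms(1), of g s'] sum.Int_Diff[OF assms(2), of g s]
  by (simp add: Int_commute)

lemma cost_diff_eq_improvement:
  assumes "i < n" "finite (\<sigma> i)" "finite s'"
  shows "cost n \<kappa> \<sigma> i - cost n \<kappa> (\<sigma>(i := s')) i = improvement \<kappa> (\<sigma> i) s' (entry_load n \<sigma> i)"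
  using cost_fun_upd_eq[OF assms(1), of \<kappa> \<sigma> "\<sigma> i"] cost_fun_upd_eq[OF assms(1), of \<kappa> \<sigma> s']
    sum_diff_eq_sum_Diff[OF assms(2,3)]
  unfolding improvement_def by simp

lemma rosenthal_potential_diff_eq_improvement:
  assumes "i < n" "finite R" "\<sigma> i \<subseteq> R" "s' \<subseteq> R"
  shows "rosenthal_potential n \<kappa> R \<sigma> - rosenthal_potential n \<kappa> R (\<sigma>(i := s'))
    = improvement \<kappa> (\<sigma> i) s' (entry_load n \<sigma> i)"
proof -
  let ?g = "\<lambda>r. \<kappa> r (entry_load n \<sigma> i r)"
  have per_resource: "(\<Sum>l=1..load n \<sigma> r. \<kappa> r l) - (\<Sum>l=1..load n (\<sigma>(i := s')) r. \<kappa> r l)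
     = (if r \<in> \<sigma> i - s' then ?g r else 0) - (if r \<in> s' - \<sigma> i then ?g r else 0)" for r
  proof -
    have "load n \<sigma> r = load n (\<sigma>(i := {})) r + (if r \<in> \<sigma> i then 1 else 0)"
      "load n (\<sigma>(i := s')) r = load n (\<sigma>(i := {})) r + (if r \<in> s' then 1 else 0)"
      using load_eq_load_fun_upd_empty[OF assms(1), of \<sigma> r]
        load_eq_load_fun_upd_empty[OF assms(1), of "\<sigma>(i := s')" r] by simp_all
    moreover have "(\<Sum>l=1..m + 1. \<kappa> r l) = (\<Sum>l=1..m. \<kappa> r l) + \<kappa> r (m + 1)" for m
      by simp
    ultimately show ?thesis unfolding entry_load_def by auto
  qed
  have "rosenthal_potential n \<kappa> R \<sigma> - rosenthal_potential n \<kappa> R (\<sigma>(i := s'))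
      = (\<Sum>r\<in>R. if r \<in> \<sigma> i - s' then ?g r else 0) - (\<Sum>r\<in>R. if r \<in> s' - \<sigma> i then ?g r else 0)"
    unfolding rosenthal_potential_def sum_subtractf[symmetric] per_resource ..
  also have "\<dots> = improvement \<kappa> (\<sigma> i) s' (entry_load n \<sigma> i)"
  proof -
    have "R \<inter> {r \<in> \<sigma> i. r \<notin> s'} = \<sigma> i - s'" "R \<inter> {r \<in> s'. r \<notin> \<sigma> i} = s' - \<sigma> i"
      using assms(3,4) by auto
    then show ?thesis unfolding improvement_def using assms(2) by (simp add: sum.If_cases)
  qed
  finally show ?thesis .
qed

lemma rosenthal_potential_bounds:
  assumes "finite R" "0 \<le> Lm" "\<forall>r\<in>R. \<forall>l\<in>{1..n}. 0 \<le> \<kappa> r l \<and> \<kappa> r l \<le> Lm"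
  shows "0 \<le> rosenthal_potential n \<kappa> R \<sigma>" "rosenthal_potential n \<kappa> R \<sigma> \<le> real (card R) * real n * Lm"
proof -
  have per_resource: "0 \<le> (\<Sum>l=1..load n \<sigma> r. \<kappa> r l) \<and> (\<Sum>l=1..load n \<sigma> r. \<kappa> r l) \<le> real n * Lm"
    if r: "r \<in> R" for r
  proof -
    have bounds: "0 \<le> \<kappa> r l \<and> \<kappa> r l \<le> Lm" if "l \<in> {1..load n \<sigma> r}" for l
      using assms(3) r that load_le[of n \<sigma> r] by auto
    have "(\<Sum>l=1..load n \<sigma> r. \<kappa> r l) \<le> (\<Sum>l=1..load n \<sigma> r. Lm)"
      using bounds by (intro sum_mono) blast
    also have "\<dots> = real (load n \<sigma> r) * Lm" by simp
    also have "\<dots> \<le> real n * Lm"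
      using load_le assms(2) by (intro mult_right_mono) auto
    finally have "(\<Sum>l=1..load n \<sigma> r. \<kappa> r l) \<le> real n * Lm" .
    moreover have "0 \<le> (\<Sum>l=1..load n \<sigma> r. \<kappa> r l)"
      using bounds by (intro sum_nonneg) blast
    ultimately show ?thesis by simp
  qed
  show "0 \<le> rosenthal_potential n \<kappa> R \<sigma>"
    unfolding rosenthal_potential_def using per_resource by (simp add: sum_nonneg)
  have "rosenthal_potential n \<kappa> R \<sigma> \<le> (\<Sum>r\<in>R. real n * Lm)"
    unfolding rosenthal_potential_def by (rule sum_mono) (use per_resource in auto)
  then show "rosenthal_potential n \<kappa> R \<sigma> \<le> real (card R) * real n * Lm" by simp
qed

lemma improvement_cong:
  assumes "\<And>r. r \<in> sym_diff s s' \<Longrightarrow> \<kappa> r (ld r) = \<kappa>' r (ld' r)"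
  shows "improvement \<kappa> s s' ld = improvement \<kappa>' s s' ld'"
  unfolding improvement_def using assms by (intro arg_cong2[where f = "(-)"] sum.cong) auto

lemma improvement_eq_signed_sum:
  assumes "finite s" "finite s'"
  shows "improvement \<kappa> s s' ld = (\<Sum>r\<in>sym_diff s s'. (if r \<in> s then 1 else -1) * \<kappa> r (ld r))"
proof -
  have "(\<Sum>r\<in>sym_diff s s'. (if r \<in> s then 1 else -1) * \<kappa> r (ld r))
      = (\<Sum>r\<in>s - s'. (if r \<in> s then 1 else -1) * \<kappa> r (ld r))
        + (\<Sum>r\<in>s' - s. (if r \<in> s then 1 else -1) * \<kappa> r (ld r))"
    using assms by (intro sum.union_disjoint) auto
  also have "\<dots> = (\<Sum>r\<in>s - s'. \<kappa> r (ld r)) + (\<Sum>r\<in>s' - s. - \<kappa> r (ld r))"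
    by (intro arg_cong2[where f = "(+)"] sum.cong) auto
  finally show ?thesis unfolding improvement_def by (simp add: sum_negf)
qed

lemma improvement_perturb_one_resource:
  assumes "finite s" "finite s'" "r0 \<in> sym_diff s s'"
    and "\<And>r. r \<in> sym_diff s s' \<Longrightarrow> r \<noteq> r0 \<Longrightarrow> \<kappa>' r (ld r) = \<kappa> r (ld r)"
    and "\<kappa>' r0 (ld r0) = \<kappa> r0 (ld r0) + \<delta>"
  shows "improvement \<kappa>' s s' ld = improvement \<kappa> s s' ld + (if r0 \<in> s then 1 else -1) * \<delta>"
proof -
  let ?sgn = "\<lambda>r. if r \<in> s then 1 else -1 :: real"
  have fin: "finite (sym_diff s s')" using assms(1,2) by simp
  have "improvement \<kappa>' s s' ld = ?sgn r0 * \<kappa>' r0 (ld r0) + (\<Sum>r\<in>sym_diff s s' - {r0}. ?sgn r * \<kappa>' r (ld r))"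
    unfolding improvement_eq_signed_sum[OF assms(1,2)] using fin assms(3) by (rule sum.remove)
  also have "(\<Sum>r\<in>sym_diff s s' - {r0}. ?sgn r * \<kappa>' r (ld r)) = (\<Sum>r\<in>sym_diff s s' - {r0}. ?sgn r * \<kappa> r (ld r))"
    using assms(4) by (intro sum.cong) auto
  also have "?sgn r0 * \<kappa>' r0 (ld r0) + \<dots> = improvement \<kappa> s s' ld + ?sgn r0 * \<delta>"
    unfolding improvement_eq_signed_sum[OF assms(1,2)] sum.remove[OF fin assms(3)] assms(5)
    by (simp add: algebra_simps)
  finally show ?thesis .
qed

lemma congestion_game_strategies:
  assumes "congestion_game n R \<Sigma>" "i < n"
  shows "finite (\<Sigma> i)" "card (\<Sigma> i) \<le> max_strat n \<Sigma>" "\<And>s. s \<in> \<Sigma> i \<Longrightarrow> finite s \<and> s \<subseteq> R"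
proof -
  have R: "finite R" "\<Sigma> i \<subseteq> Pow R" using assms unfolding congestion_game_def by auto
  then show "finite (\<Sigma> i)" by (meson finite_Pow_iff finite_subset)
  show "\<And>s. s \<in> \<Sigma> i \<Longrightarrow> finite s \<and> s \<subseteq> R" using R by (auto intro: finite_subset)
  have "finite ((\<lambda>i. card (\<Sigma> i)) ` {..<n})" by simp
  moreover have "{card (\<Sigma> i) | i. i < n} = (\<lambda>i. card (\<Sigma> i)) ` {..<n}" by auto
  ultimately show "card (\<Sigma> i) \<le> max_strat n \<Sigma>"
    unfolding max_strat_def using assms(2) by (intro Max_ge) auto
qed

lemma better_response_step_decreases_potential:
  assumes "congestion_game n R \<Sigma>" "is_profile n \<Sigma> \<sigma>" "better_response_step n \<Sigma> \<kappa> \<sigma> \<sigma>'"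
  obtains i s' where "i < n" "s' \<in> \<Sigma> i" "\<sigma>' = \<sigma>(i := s')"
    "rosenthal_potential n \<kappa> R \<sigma> - rosenthal_potential n \<kappa> R \<sigma>'
       = improvement \<kappa> (\<sigma> i) s' (entry_load n \<sigma> i)"
    "0 < improvement \<kappa> (\<sigma> i) s' (entry_load n \<sigma> i)"
proof -
  obtain i s' where i: "i < n" "s' \<in> \<Sigma> i" "\<sigma>' = \<sigma>(i := s')"
    and better: "cost n \<kappa> \<sigma>' i < cost n \<kappa> \<sigma> i"
    using assms(3) unfolding better_response_step_def by blast
  have "finite R" "\<sigma> i \<subseteq> R" "s' \<subseteq> R"
    using assms(1,2) i unfolding congestion_game_def is_profile_def by auto
  moreover from this have "finite (\<sigma> i)" "finite s'" by (auto intro: finite_subset)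
  ultimately show ?thesis
    using that[OF i] i better cost_diff_eq_improvement[OF i(1), of \<sigma> s' \<kappa>]
      rosenthal_potential_diff_eq_improvement[OF i(1), of R \<sigma> s' \<kappa>] by simp
qed

lemma better_response_step_potential_drop:
  assumes "congestion_game n R \<Sigma>" "is_profile n \<Sigma> \<sigma>" "better_response_step n \<Sigma> \<kappa> \<sigma> \<sigma>'"
  obtains i s s' ld where "i < n" "s \<in> \<Sigma> i" "s' \<in> \<Sigma> i" "ld \<in> PiE (sym_diff s s') (\<lambda>_. {1..n})"
    "rosenthal_potential n \<kappa> R \<sigma> - rosenthal_potential n \<kappa> R \<sigma>' = improvement \<kappa> s s' ld"
    "0 < improvement \<kappa> s s' ld"
proof -
  obtain i s' where i: "i < n" "s' \<in> \<Sigma> i" "\<sigma>' = \<sigma>(i := s')"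
    and drop: "rosenthal_potential n \<kappa> R \<sigma> - rosenthal_potential n \<kappa> R \<sigma>'
       = improvement \<kappa> (\<sigma> i) s' (entry_load n \<sigma> i)"
    and pos: "0 < improvement \<kappa> (\<sigma> i) s' (entry_load n \<sigma> i)"
    by (rule better_response_step_decreases_potential[OF assms])
  define ld where "ld = restrict (entry_load n \<sigma> i) (sym_diff (\<sigma> i) s')"
  have "ld \<in> PiE (sym_diff (\<sigma> i) s') (\<lambda>_. {1..n})"
    using entry_load_le[OF i(1)] unfolding ld_def entry_load_def by auto
  moreover have "improvement \<kappa> (\<sigma> i) s' ld = improvement \<kappa> (\<sigma> i) s' (entry_load n \<sigma> i)"
    unfolding ld_def by (rule improvement_cong) simp
  moreover have "\<sigma> i \<in> \<Sigma> i" using assms(2) i(1) unfolding is_profile_def by simp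
  ultimately show ?thesis using that[OF i(1) _ i(2)] drop pos by simp
qed

lemma better_response_run_is_profile:
  assumes "is_profile n \<Sigma> (p 0)" "\<forall>t<L. better_response_step n \<Sigma> \<kappa> (p t) (p (Suc t))" "t \<le> L"
  shows "is_profile n \<Sigma> (p t)"
  using assms(3)
proof (induction t)
  case (Suc t)
  then have "t < L" by simp
  then obtain i s' where "i < n" "s' \<in> \<Sigma> i" "p (Suc t) = (p t)(i := s')"
    using assms(2) unfolding better_response_step_def by blast
  with Suc show ?case unfolding is_profile_def by auto
qed (use assms(1) in simp)

lemma better_response_run_potential_decreasing:
  assumes "congestion_game n R \<Sigma>" "is_profile n \<Sigma> (p 0)"
    and steps: "\<forall>t<L. better_response_step n \<Sigma> \<kappa> (p t) (p (Suc t))"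
    and "t < t'" "t' \<le> L"
  shows "rosenthal_potential n \<kappa> R (p t') < rosenthal_potential n \<kappa> R (p t)"
  using assms(4,5)
proof (induction t' rule: less_Suc_induct)
  case (1 u)
  have "is_profile n \<Sigma> (p u)"
    using better_response_run_is_profile[OF assms(2) steps] 1 by simp
  moreover have "better_response_step n \<Sigma> \<kappa> (p u) (p (Suc u))"
    using steps 1 by simp
  ultimately show ?case
    by (rule better_response_step_decreases_potential[OF assms(1)]) (simp del: fun_upd_apply)
next
  case (2 u v w)
  then show ?case by simp
qed

lemma better_response_run_length_lt:
  assumes "congestion_game n R \<Sigma>" "is_profile n \<Sigma> (p 0)"
    and "\<forall>t<L. better_response_step n \<Sigma> \<kappa> (p t) (p (Suc t))"
  shows "L < (n + 1) ^ card R"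
proof -
  have "finite R" using assms(1) unfolding congestion_game_def by simp
  define loads where "loads t = restrict (load n (p t)) R" for t
  have "rosenthal_potential n \<kappa> R (p t) = (\<Sum>r\<in>R. \<Sum>l=1..loads t r. \<kappa> r l)" for t
    unfolding rosenthal_potential_def loads_def by (intro sum.cong) auto
  then have "inj_on loads {0..L}"
    using better_response_run_potential_decreasing[OF assms]
    by (intro inj_onI) (metis atLeastAtMost_iff less_irrefl linorder_neqE_nat)
  moreover have "loads ` {0..L} \<subseteq> PiE R (\<lambda>_. {0..n})"
    unfolding loads_def using load_le by auto
  ultimately have "card {0..L} \<le> card (PiE R (\<lambda>_. {0..n::nat}))"
    using \<open>finite R\<close> by (intro card_inj_on_le) (auto simp: finite_PiE)
  then show ?thesis using \<open>finite R\<close> by (simp add: card_PiE)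
qed

lemma better_response_run_has_small_improvement:
  assumes "congestion_game n R \<Sigma>" "0 \<le> Lm" "\<forall>r\<in>R. \<forall>l\<in>{1..n}. 0 \<le> \<kappa> r l \<and> \<kappa> r l \<le> Lm"
    and "is_profile n \<Sigma> (p 0)" and steps: "\<forall>u<L. better_response_step n \<Sigma> \<kappa> (p u) (p (Suc u))"
    and "t \<in> {1..L}"
  shows "\<exists>i<n. \<exists>s\<in>\<Sigma> i. \<exists>s'\<in>\<Sigma> i. \<exists>ld\<in>PiE (sym_diff s s') (\<lambda>_. {1..n}).
           0 < improvement \<kappa> s s' ld \<and> improvement \<kappa> s s' ld \<le> real (card R) * real n * Lm / real t"
proof (rule ccontr)
  assume no_small: "\<not> ?thesis"
  define D where "D = real (card R) * real n * Lm"
  define \<Phi> where "\<Phi> u = rosenthal_potential n \<kappa> R (p u)" for u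
  have large_drop: "D / real t < \<Phi> u - \<Phi> (Suc u)" if "u < L" for u
  proof -
    have "is_profile n \<Sigma> (p u)"
      using better_response_run_is_profile[OF assms(4) steps] that by simp
    moreover have "better_response_step n \<Sigma> \<kappa> (p u) (p (Suc u))"
      using steps that by simp
    ultimately obtain i s s' ld where "i < n" "s \<in> \<Sigma> i" "s' \<in> \<Sigma> i" "ld \<in> PiE (sym_diff s s') (\<lambda>_. {1..n})"
      and drop: "\<Phi> u - \<Phi> (Suc u) = improvement \<kappa> s s' ld" and "0 < improvement \<kappa> s s' ld"
      unfolding \<Phi>_def by (rule better_response_step_potential_drop[OF assms(1)])
    show ?thesis
    proof (rule ccontr)
      assume "\<not> ?thesis"
      then have "improvement \<kappa> s s' ld \<le> D / real t" using drop by simp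
      then show False
        using no_small \<open>i < n\<close> \<open>s \<in> \<Sigma> i\<close> \<open>s' \<in> \<Sigma> i\<close> \<open>ld \<in> _\<close> \<open>0 < improvement \<kappa> s s' ld\<close>
        unfolding D_def by blast
    qed
  qed
  have "real L * (D / real t) = (\<Sum>u<L. D / real t)" by simp
  also have "\<dots> < (\<Sum>u<L. \<Phi> u - \<Phi> (Suc u))"
    using assms(6) large_drop by (intro sum_strict_mono) (auto simp: lessThan_empty_iff)
  also have "\<dots> = \<Phi> 0 - \<Phi> L"
    by (rule sum_lessThan_telescope')
  also have "\<dots> \<le> D"
    using rosenthal_potential_bounds[OF _ assms(2,3)] assms(1)
    unfolding \<Phi>_def D_def congestion_game_def by (simp add: algebra_simps add_increasing)
  finally have "real L * (D / real t) < D" .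
  moreover have "D \<le> real L * (D / real t)"
  proof -
    have "D * real t \<le> D * real L"
      using assms(2,6) unfolding D_def by (intro mult_left_mono) auto
    then show ?thesis using assms(6) by (simp add: field_simps)
  qed
  ultimately show False by simp
qed

section \<open>Expected length of better-response runs\<close>

definition small_improvement_event ::
    "'a measure \<Rightarrow> nat \<Rightarrow> (nat \<Rightarrow> nat set set) \<Rightarrow> ('a \<Rightarrow> nat \<Rightarrow> nat \<Rightarrow> real) \<Rightarrow> real \<Rightarrow> 'a set" where
  "small_improvement_event M n \<Sigma> lat \<epsilon> =
     (\<Union>i<n. \<Union>s\<in>\<Sigma> i. \<Union>s'\<in>\<Sigma> i. \<Union>ld\<in>PiE (sym_diff s s') (\<lambda>_. {1..n}).
        {x \<in> space M. 0 < improvement (lat x) s s' ld \<and> improvement (lat x) s s' ld \<le> \<epsilon>})"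

lemma harm_le_one_plus_ln:
  assumes "1 \<le> T"
  shows "(harm T :: real) \<le> 1 + ln (real T)"
  using assms
proof (induction T rule: dec_induct)
  case base
  then show ?case by (simp add: harm_def)
next
  case (step T)
  have "1 / real (Suc T) \<le> ln (real (Suc T)) - ln (real T)"
  proof -
    have "ln (real T / real (Suc T)) \<le> real T / real (Suc T) - 1"
      using step.hyps by (intro ln_le_minus_one) auto
    also have "\<dots> = - (1 / real (Suc T))" by (simp add: field_simps)
    finally show ?thesis using step.hyps by (simp add: ln_div)
  qed
  then show ?case using step.IH by (simp add: harm_Suc inverse_eq_divide)
qed

lemma max_br_steps_le_sum_indicator:
  assumes "congestion_game n R \<Sigma>" "0 \<le> Lm" "x \<in> space M"
    and "\<forall>r\<in>R. \<forall>l\<in>{1..n}. 0 \<le> lat x r l \<and> lat x r l \<le> Lm"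
  shows "max_br_steps n \<Sigma> (lat x)
    \<le> (\<Sum>t=1..(n + 1) ^ card R.
          indicator (small_improvement_event M n \<Sigma> lat (real (card R) * real n * Lm / real t)) x)"
proof -
  let ?E = "\<lambda>t. small_improvement_event M n \<Sigma> lat (real (card R) * real n * Lm / real t)"
  have "of_nat L \<le> (\<Sum>t=1..(n + 1) ^ card R. indicator (?E t) x :: ennreal)"
    if run: "is_profile n \<Sigma> (p 0)" "\<forall>t<L. better_response_step n \<Sigma> (lat x) (p t) (p (Suc t))" for L p
  proof -
    have "x \<in> ?E t" if t: "t \<in> {1..L}" for t
    proof -
      obtain i s s' ld where "i < n" "s \<in> \<Sigma> i" "s' \<in> \<Sigma> i" "ld \<in> PiE (sym_diff s s') (\<lambda>_. {1..n})"
        "0 < improvement (lat x) s s' ld" "improvement (lat x) s s' ld \<le> real (card R) * real n * Lm / real t"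
        using better_response_run_has_small_improvement[where p = p, OF assms(1,2,4) run t] by blast
      then show ?thesis unfolding small_improvement_event_def using assms(3) by blast
    qed
    then have "of_nat L = (\<Sum>t=1..L. indicator (?E t) x :: ennreal)"
      by (simp add: indicator_def)
    also have "\<dots> \<le> (\<Sum>t=1..(n + 1) ^ card R. indicator (?E t) x)"
      using better_response_run_length_lt[OF assms(1) run] by (intro sum_mono2) auto
    finally show ?thesis .
  qed
  then show ?thesis unfolding max_br_steps_def by (intro SUP_least) auto
qed

lemma nn_integral_max_br_steps_le:
  assumes "congestion_game n R \<Sigma>" "0 \<le> Lm" "0 \<le> c"
    and "AE x in M. \<forall>r\<in>R. \<forall>l\<in>{1..n}. 0 \<le> lat x r l \<and> lat x r l \<le> Lm"
    and events_sets: "\<And>\<epsilon>. 0 \<le> \<epsilon> \<Longrightarrow> small_improvement_event M n \<Sigma> lat \<epsilon> \<in> sets M"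
    and events_small: "\<And>\<epsilon>. 0 \<le> \<epsilon> \<Longrightarrow> emeasure M (small_improvement_event M n \<Sigma> lat \<epsilon>) \<le> ennreal (c * \<epsilon>)"
  shows "(\<integral>\<^sup>+x. max_br_steps n \<Sigma> (lat x) \<partial>M)
    \<le> ennreal (c * (real (card R) * real n * Lm) * (1 + real (card R) * ln (real n + 1)))"
proof -
  define T where "T = (n + 1) ^ card R"
  define D where "D = real (card R) * real n * Lm"
  let ?E = "\<lambda>t. small_improvement_event M n \<Sigma> lat (D / real t)"
  have "0 \<le> D" "1 \<le> T" unfolding D_def T_def using assms(2) by simp_all
  have "(\<integral>\<^sup>+x. max_br_steps n \<Sigma> (lat x) \<partial>M) \<le> (\<integral>\<^sup>+x. (\<Sum>t=1..T. indicator (?E t) x) \<partial>M)"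
  proof (intro nn_integral_mono_AE)
    show "AE x in M. max_br_steps n \<Sigma> (lat x) \<le> (\<Sum>t=1..T. indicator (?E t) x)"
      using assms(4) AE_space
    proof eventually_elim
      case (elim x)
      show ?case
        using max_br_steps_le_sum_indicator[where lat = lat, OF assms(1,2) elim(2,1)] unfolding T_def D_def .
    qed
  qed
  also have "\<dots> = (\<Sum>t=1..T. emeasure M (?E t))"
    using events_sets \<open>0 \<le> D\<close> by (subst nn_integral_sum) auto
  also have "\<dots> \<le> (\<Sum>t=1..T. ennreal (c * (D / real t)))"
    using events_small[of "D / real _"] \<open>0 \<le> D\<close> by (intro sum_mono) simp
  also have "\<dots> = ennreal (c * D * harm T)"
    using assms(3) \<open>0 \<le> D\<close>
    by (subst sum_ennreal) (auto simp: harm_def sum_distrib_left inverse_eq_divide)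
  also have "\<dots> \<le> ennreal (c * D * (1 + real (card R) * ln (real n + 1)))"
    using harm_le_one_plus_ln[OF \<open>1 \<le> T\<close>] assms(3) \<open>0 \<le> D\<close>
    unfolding T_def by (intro ennreal_leI mult_left_mono) (auto simp: ln_realpow add.commute)
  finally show ?thesis unfolding D_def .
qed

section \<open>Smoothed parameters\<close>

lemma prob_space_smoothing_density:
  assumes "smoothing_density \<phi> g"
  shows "prob_space (density lborel (\<lambda>x. ennreal (g x)))"
  using assms unfolding smoothing_density_def by (intro prob_spaceI) (simp add: emeasure_density)

lemma smoothing_density_window_le:
  assumes "smoothing_density \<phi> g" "c = 1 \<or> c = -1" "0 \<le> \<epsilon>"
  shows "emeasure (density lborel (\<lambda>x. ennreal (g x))) {y. 0 < c * y + a \<and> c * y + a \<le> \<epsilon>}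
    \<le> ennreal (\<phi> * \<epsilon>)"
proof -
  have g: "g \<in> borel_measurable lborel" "\<And>x. 0 \<le> g x \<and> g x \<le> \<phi>"
    using assms(1) unfolding smoothing_density_def by auto
  define W where "W = {y. 0 < c * y + a \<and> c * y + a \<le> \<epsilon>}"
  have "W = {-a<..\<epsilon> - a} \<or> W = {a - \<epsilon>..<a}"
    using assms(2) unfolding W_def by (auto simp: algebra_simps)
  then have W: "W \<in> sets lborel" "emeasure lborel W = ennreal \<epsilon>"
    using assms(3) by auto
  have "emeasure (density lborel (\<lambda>x. ennreal (g x))) W = (\<integral>\<^sup>+y. ennreal (g y) * indicator W y \<partial>lborel)"
    using g(1) W(1) by (simp add: emeasure_density)
  also have "\<dots> \<le> (\<integral>\<^sup>+y. ennreal \<phi> * indicator W y \<partial>lborel)"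
    using g(2) by (intro nn_integral_mono) (auto simp: indicator_def intro: ennreal_leI)
  also have "\<dots> = ennreal (\<phi> * \<epsilon>)"
    using W g(2)[of 0] assms(3) by (simp add: nn_integral_cmult_indicator ennreal_mult)
  finally show ?thesis unfolding W_def .
qed

lemma measurable_param_space_component:
  assumes "w \<in> I"
  shows "(\<lambda>x. x w) \<in> borel_measurable (param_space I f)"
  using measurable_component_singleton[OF assms, of "\<lambda>i. density lborel (\<lambda>x. ennreal (f i x))"]
  unfolding param_space_def by (simp cong: measurable_cong_sets)

lemma AE_param_space_unit_interval:
  assumes "finite I" "\<forall>i\<in>I. smoothing_density \<phi> (f i)"
  shows "AE x in param_space I f. \<forall>v\<in>I. 0 \<le> x v \<and> x v \<le> 1"
proof (rule AE_finite_allI[OF assms(1)])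
  fix v assume "v \<in> I"
  have "f v \<in> borel_measurable lborel" "\<And>y. f v y \<noteq> 0 \<Longrightarrow> 0 \<le> y \<and> y \<le> 1"
    using assms(2) \<open>v \<in> I\<close> unfolding smoothing_density_def by auto
  then have "AE y in density lborel (\<lambda>x. ennreal (f v x)). 0 \<le> y \<and> y \<le> 1"
    by (subst AE_density) (auto intro!: AE_I2)
  then show "AE x in param_space I f. 0 \<le> x v \<and> x v \<le> 1"
    unfolding param_space_def
    by (intro AE_PiM_component[OF _ \<open>v \<in> I\<close>]) (use assms(2) prob_space_smoothing_density in auto)
qed

text \<open>Conditioning on all other parameters leaves the window \<open>(0, \<epsilon>]\<close> for a single
  coordinate of density at most \<open>\<phi>\<close>.\<close>
lemma emeasure_unit_slope_window_le:
  fixes g :: "(nat \<times> nat \<Rightarrow> real) \<Rightarrow> real"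
  assumes "finite I" and dens: "\<forall>i\<in>I. smoothing_density \<phi> (f i)" and "v \<in> I" "c = 1 \<or> c = -1"
    and g_meas: "g \<in> borel_measurable (param_space I f)"
    and slope: "\<And>x y. g (x(v := y)) = g x + c * (y - x v)"
    and "0 \<le> \<epsilon>"
  shows "emeasure (param_space I f) {x \<in> space (param_space I f). 0 < g x \<and> g x \<le> \<epsilon>} \<le> ennreal (\<phi> * \<epsilon>)"
proof -
  define M where "M i = (if i \<in> I then density lborel (\<lambda>x. ennreal (f i x)) else return lborel 0)" for i
  have "prob_space (M i)" for i
    unfolding M_def using dens prob_space_smoothing_density by (auto intro: prob_space_return)
  then interpret product_prob_space M
    by (auto simp: product_prob_space_def product_sigma_finite_def product_prob_space_axioms_def
        intro: prob_space_imp_sigma_finite)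
  have param_space: "param_space I f = PiM I M"
    unfolding param_space_def M_def by (rule PiM_cong) auto
  define J where "J = I - {v}"
  have I: "I = insert v J" "v \<notin> J" "finite J" using assms(1,3) unfolding J_def by auto
  define A where "A = {x \<in> space (PiM I M). 0 < g x \<and> g x \<le> \<epsilon>}"
  have "A \<in> sets (PiM I M)"
    using g_meas unfolding A_def param_space by measurable
  then have "emeasure (PiM I M) A = (\<integral>\<^sup>+x. indicator A x \<partial>PiM (insert v J) M)"
    using I(1) by simp
  also have "\<dots> = (\<integral>\<^sup>+x. (\<integral>\<^sup>+y. indicator A (x(v := y)) \<partial>M v) \<partial>PiM J M)"
    using \<open>A \<in> sets (PiM I M)\<close> I by (intro product_nn_integral_insert) auto
  also have "\<dots> \<le> (\<integral>\<^sup>+x. ennreal (\<phi> * \<epsilon>) \<partial>PiM J M)"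
  proof (intro nn_integral_mono)
    fix x assume x: "x \<in> space (PiM J M)"
    define a where "a = g x - c * x v"
    have "indicator A (x(v := y)) = indicator {y. 0 < c * y + a \<and> c * y + a \<le> \<epsilon>} y" for y
    proof -
      have "x(v := y) \<in> space (PiM I M)"
        using x unfolding space_PiM I(1) by (intro PiE_fun_upd) (auto simp: M_def assms(3))
      then show ?thesis
        unfolding A_def a_def by (simp add: indicator_def slope algebra_simps)
    qed
    then have "(\<integral>\<^sup>+y. indicator A (x(v := y)) \<partial>M v)
        = (\<integral>\<^sup>+y. indicator {y. 0 < c * y + a \<and> c * y + a \<le> \<epsilon>} y \<partial>M v)"
      by (rule nn_integral_cong)
    also have "\<dots> \<le> ennreal (\<phi> * \<epsilon>)"
      using smoothing_density_window_le[of \<phi> "f v" c \<epsilon> a] dens assms(3,4,7)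
      unfolding M_def by simp
    finally show "(\<integral>\<^sup>+y. indicator A (x(v := y)) \<partial>M v) \<le> ennreal (\<phi> * \<epsilon>)" .
  qed
  also have "\<dots> = ennreal (\<phi> * \<epsilon>)"
  proof -
    interpret J: prob_space "PiM J M" by (rule prob_space_PiM) (use \<open>\<And>i. prob_space (M i)\<close> in auto)
    show ?thesis by (simp add: J.emeasure_space_1)
  qed
  finally show ?thesis unfolding A_def param_space .
qed

lemma UN_sets_emeasure_le_card_mult:
  assumes "finite X" "card X \<le> K" "0 \<le> b"
    and "\<And>x. x \<in> X \<Longrightarrow> A x \<in> sets M \<and> emeasure M (A x) \<le> ennreal b"
  shows "(\<Union>x\<in>X. A x) \<in> sets M \<and> emeasure M (\<Union>x\<in>X. A x) \<le> ennreal (real K * b)"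
proof
  show "(\<Union>x\<in>X. A x) \<in> sets M" using assms(1,4) by auto
  have "emeasure M (\<Union>x\<in>X. A x) \<le> (\<Sum>x\<in>X. emeasure M (A x))"
    using assms(1,4) by (intro emeasure_subadditive_finite) auto
  also have "\<dots> \<le> (\<Sum>x\<in>X. ennreal b)"
    using assms(4) by (intro sum_mono) blast
  also have "\<dots> = ennreal (real (card X) * b)"
    using assms(3) by (simp add: ennreal_of_nat_eq_real_of_nat ennreal_mult)
  also have "\<dots> \<le> ennreal (real K * b)"
    using assms(2,3) by (intro ennreal_leI mult_right_mono) auto
  finally show "emeasure M (\<Union>x\<in>X. A x) \<le> ennreal (real K * b)" .
qed

lemma card_image_le_card_image_if_factors:
  assumes "finite (Q ` X)" "\<And>a b. a \<in> X \<Longrightarrow> b \<in> X \<Longrightarrow> Q a = Q b \<Longrightarrow> A a = A b"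
  shows "card (A ` X) \<le> card (Q ` X)"
proof -
  have "A a = A (inv_into X Q (Q a))" if "a \<in> X" for a
  proof (rule assms(2)[OF that])
    show "inv_into X Q (Q a) \<in> X" "Q a = Q (inv_into X Q (Q a))"
      using that by (simp_all add: inv_into_into f_inv_into_f)
  qed
  then have "A ` X = (\<lambda>c. A (inv_into X Q c)) ` Q ` X"
    unfolding image_image by (rule image_cong[OF refl])
  then show ?thesis using assms(1) by (simp add: card_image_le)
qed

section \<open>Latency models\<close>

text \<open>Latencies at two loads of the same \<open>level\<close> coincide, so a strategy change has at most
  \<open>|V|\<^sup>B\<close> essentially different load patterns.\<close>
locale smoothed_latency_model =
  fixes n :: nat and R :: "nat set" and I :: "(nat \<times> nat) set" and f :: "nat \<times> nat \<Rightarrow> real \<Rightarrow> real"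
    and \<phi> :: real and lat :: "(nat \<times> nat \<Rightarrow> real) \<Rightarrow> nat \<Rightarrow> nat \<Rightarrow> real" and Lm :: real
    and V :: "nat set" and level :: "nat \<Rightarrow> nat \<Rightarrow> nat"
  assumes finite_params: "finite I"
    and densities: "\<forall>i\<in>I. smoothing_density \<phi> (f i)"
    and lat_measurable: "\<And>r l. r \<in> R \<Longrightarrow> l \<in> {1..n} \<Longrightarrow> (\<lambda>x. lat x r l) \<in> borel_measurable (param_space I f)"
    and lat_local: "\<And>r l x w y. r \<in> R \<Longrightarrow> l \<in> {1..n} \<Longrightarrow> fst w \<noteq> r \<Longrightarrow> lat (x(w := y)) r l = lat x r l"
    and lat_zero_or_unit_slope: "\<And>r l. r \<in> R \<Longrightarrow> l \<in> {1..n} \<Longrightarrow> (\<forall>x. lat x r l = 0) \<or>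
       (\<exists>j. (r, j) \<in> I \<and> (\<forall>x y. lat (x((r, j) := y)) r l = lat x r l + (y - x (r, j))))"
    and lat_bounded: "AE x in param_space I f. \<forall>r\<in>R. \<forall>l\<in>{1..n}. 0 \<le> lat x r l \<and> lat x r l \<le> Lm"
    and Lm_nonneg: "0 \<le> Lm"
    and finite_levels: "finite V" and levels_nonempty: "V \<noteq> {}"
    and level_in: "\<And>r l. r \<in> R \<Longrightarrow> l \<in> {1..n} \<Longrightarrow> level r l \<in> V"
    and lat_level: "\<And>r l l' x. r \<in> R \<Longrightarrow> l \<in> {1..n} \<Longrightarrow> l' \<in> {1..n} \<Longrightarrow> level r l = level r l'
       \<Longrightarrow> lat x r l = lat x r l'"
begin

abbreviation "M \<equiv> param_space I f"

definition improvement_window :: "nat set \<Rightarrow> nat set \<Rightarrow> (nat \<Rightarrow> nat) \<Rightarrow> real \<Rightarrow> (nat \<times> nat \<Rightarrow> real) set" where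
  "improvement_window s s' ld \<epsilon> =
     {x \<in> space M. 0 < improvement (lat x) s s' ld \<and> improvement (lat x) s s' ld \<le> \<epsilon>}"

lemma improvement_measurable:
  assumes "sym_diff s s' \<subseteq> R" "ld \<in> PiE (sym_diff s s') (\<lambda>_. {1..n})"
  shows "(\<lambda>x. improvement (lat x) s s' ld) \<in> borel_measurable M"
  unfolding improvement_def using assms
  by (intro borel_measurable_diff borel_measurable_sum lat_measurable) (auto simp: PiE_iff)

lemma improvement_window_sets:
  assumes "sym_diff s s' \<subseteq> R" "ld \<in> PiE (sym_diff s s') (\<lambda>_. {1..n})"
  shows "improvement_window s s' ld \<epsilon> \<in> sets M"
  using improvement_measurable[OF assms] unfolding improvement_window_def by measurable

lemma emeasure_improvement_window_le:
  assumes "finite s" "finite s'" "sym_diff s s' \<subseteq> R" "ld \<in> PiE (sym_diff s s') (\<lambda>_. {1..n})" "0 \<le> \<epsilon>"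
  shows "emeasure M (improvement_window s s' ld \<epsilon>) \<le> ennreal (\<phi> * \<epsilon>)"
proof (cases "\<forall>r\<in>sym_diff s s'. \<forall>x. lat x r (ld r) = 0")
  case True
  then have "improvement (lat x) s s' ld = 0" for x
    unfolding improvement_eq_signed_sum[OF assms(1,2)] by simp
  then show ?thesis unfolding improvement_window_def by simp
next
  case False
  then obtain r0 where r0: "r0 \<in> sym_diff s s'" and "\<not> (\<forall>x. lat x r0 (ld r0) = 0)" by blast
  moreover have r0_range: "r0 \<in> R" "ld r0 \<in> {1..n}" using r0 assms(3,4) by auto
  ultimately obtain j where "(r0, j) \<in> I"
    and j: "\<And>x y. lat (x((r0, j) := y)) r0 (ld r0) = lat x r0 (ld r0) + (y - x (r0, j))"
    using lat_zero_or_unit_slope by blast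
  have "improvement (lat (x((r0, j) := y))) s s' ld
      = improvement (lat x) s s' ld + (if r0 \<in> s then 1 else -1) * (y - x (r0, j))" for x y
    using assms(1-4) r0 j lat_local by (intro improvement_perturb_one_resource) (auto simp: PiE_iff)
  then show ?thesis
    unfolding improvement_window_def
    by (intro emeasure_unit_slope_window_le[OF finite_params densities \<open>(r0, j) \<in> I\<close>,
          where c = "if r0 \<in> s then 1 else -1", OF _ improvement_measurable[OF assms(3,4)]] assms(5))
      simp_all
qed

lemma UN_improvement_window_sets_emeasure_le:
  assumes s: "finite s" "finite s'" "sym_diff s s' \<subseteq> R" and "card (sym_diff s s') \<le> B"
    and "0 \<le> \<phi>" "0 \<le> \<epsilon>"
  shows "(\<Union>ld\<in>PiE (sym_diff s s') (\<lambda>_. {1..n}). improvement_window s s' ld \<epsilon>) \<in> sets M \<and>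
    emeasure M (\<Union>ld\<in>PiE (sym_diff s s') (\<lambda>_. {1..n}). improvement_window s s' ld \<epsilon>)
      \<le> ennreal (real (card V ^ B) * (\<phi> * \<epsilon>))"
proof -
  let ?P = "PiE (sym_diff s s') (\<lambda>_. {1..n})"
  let ?W = "\<lambda>ld. improvement_window s s' ld \<epsilon>"
  let ?Q = "\<lambda>ld. restrict (\<lambda>r. level r (ld r)) (sym_diff s s')"
  have "card (?W ` ?P) \<le> card (?Q ` ?P)"
  proof (rule card_image_le_card_image_if_factors)
    show "finite (?Q ` ?P)" using s by (simp add: finite_PiE)
    fix ld ld' assume ld: "ld \<in> ?P" "ld' \<in> ?P" and "?Q ld = ?Q ld'"
    have "level r (ld r) = level r (ld' r)" if "r \<in> sym_diff s s'" for r
      using fun_cong[OF \<open>?Q ld = ?Q ld'\<close>, of r] by (simp only: restrict_apply'[OF that])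
    then have "improvement (lat x) s s' ld = improvement (lat x) s s' ld'" for x
      using s(3) ld by (intro improvement_cong lat_level) (auto simp: PiE_iff)
    then show "?W ld = ?W ld'" unfolding improvement_window_def by simp
  qed
  also have "\<dots> \<le> card (PiE (sym_diff s s') (\<lambda>_. V))"
    using s level_in finite_levels by (intro card_mono) (auto simp: finite_PiE PiE_iff)
  also have "\<dots> \<le> card V ^ B"
    using assms(4) s finite_levels levels_nonempty
    by (simp add: card_PiE Suc_le_eq card_gt_0_iff power_increasing)
  finally have "card (?W ` ?P) \<le> card V ^ B" .
  then have "(\<Union>E\<in>?W ` ?P. E) \<in> sets M \<and> emeasure M (\<Union>E\<in>?W ` ?P. E) \<le> ennreal (real (card V ^ B) * (\<phi> * \<epsilon>))"
    using s assms(5,6)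
    by (intro UN_sets_emeasure_le_card_mult)
      (auto simp: finite_PiE improvement_window_sets emeasure_improvement_window_le)
  then show ?thesis by simp
qed

lemma small_improvement_event_sets_emeasure_le:
  assumes "congestion_game n R \<Sigma>" "restrained n \<Sigma> B" "0 \<le> \<phi>" "0 \<le> \<epsilon>"
  shows "small_improvement_event M n \<Sigma> lat \<epsilon> \<in> sets M \<and>
    emeasure M (small_improvement_event M n \<Sigma> lat \<epsilon>)
      \<le> ennreal (real n * (real (max_strat n \<Sigma>) * (real (max_strat n \<Sigma>) * (real (card V ^ B) * (\<phi> * \<epsilon>)))))"
proof -
  let ?k = "max_strat n \<Sigma>"
  let ?U = "\<lambda>s s'. \<Union>ld\<in>PiE (sym_diff s s') (\<lambda>_. {1..n}). improvement_window s s' ld \<epsilon>"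
  have U: "?U s s' \<in> sets M \<and> emeasure M (?U s s') \<le> ennreal (real (card V ^ B) * (\<phi> * \<epsilon>))"
    if "i < n" "s \<in> \<Sigma> i" "s' \<in> \<Sigma> i" for i s s'
    using congestion_game_strategies(3)[OF assms(1) that(1)] that assms(2-4)
    unfolding restrained_def by (intro UN_improvement_window_sets_emeasure_le) auto
  let ?b = "real (card V ^ B) * (\<phi> * \<epsilon>)"
  have "0 \<le> ?b" using assms(3,4) by simp
  have per_strategy: "(\<Union>s'\<in>\<Sigma> i. ?U s s') \<in> sets M \<and> emeasure M (\<Union>s'\<in>\<Sigma> i. ?U s s') \<le> ennreal (real ?k * ?b)"
    if "i < n" "s \<in> \<Sigma> i" for i s
    by (rule UN_sets_emeasure_le_card_mult)
      (use U[OF that] congestion_game_strategies(1,2)[OF assms(1) that(1)] \<open>0 \<le> ?b\<close> in simp_all)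
  have per_player: "(\<Union>s\<in>\<Sigma> i. \<Union>s'\<in>\<Sigma> i. ?U s s') \<in> sets M \<and>
      emeasure M (\<Union>s\<in>\<Sigma> i. \<Union>s'\<in>\<Sigma> i. ?U s s') \<le> ennreal (real ?k * (real ?k * ?b))"
    if "i < n" for i
    by (rule UN_sets_emeasure_le_card_mult)
      (use per_strategy congestion_game_strategies(1,2)[OF assms(1) that] \<open>0 \<le> ?b\<close> that in simp_all)
  have "(\<Union>i<n. \<Union>s\<in>\<Sigma> i. \<Union>s'\<in>\<Sigma> i. ?U s s') \<in> sets M \<and>
    emeasure M (\<Union>i<n. \<Union>s\<in>\<Sigma> i. \<Union>s'\<in>\<Sigma> i. ?U s s') \<le> ennreal (real n * (real ?k * (real ?k * ?b)))"
    by (rule UN_sets_emeasure_le_card_mult) (use per_player \<open>0 \<le> ?b\<close> in simp_all)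
  then show ?thesis unfolding small_improvement_event_def improvement_window_def .
qed

lemma expected_max_br_steps_le:
  assumes "congestion_game n R \<Sigma>" "restrained n \<Sigma> B" "0 \<le> \<phi>"
  shows "(\<integral>\<^sup>+x. max_br_steps n \<Sigma> (lat x) \<partial>M)
    \<le> ennreal (\<phi> * (real n * real (max_strat n \<Sigma>) ^ 2 * real (card V) ^ B
                * (real (card R) * real n * Lm) * (1 + real (card R) * ln (real n + 1))))"
proof -
  define c where "c = real n * (real (max_strat n \<Sigma>) * (real (max_strat n \<Sigma>) * (real (card V ^ B) * \<phi>)))"
  have "0 \<le> c" using assms(3) unfolding c_def by simp
  have "(\<integral>\<^sup>+x. max_br_steps n \<Sigma> (lat x) \<partial>M)
      \<le> ennreal (c * (real (card R) * real n * Lm) * (1 + real (card R) * ln (real n + 1)))"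
    using small_improvement_event_sets_emeasure_le[OF assms]
    by (intro nn_integral_max_br_steps_le[OF assms(1) Lm_nonneg \<open>0 \<le> c\<close> lat_bounded])
      (simp_all add: c_def mult.assoc)
  then show ?thesis unfolding c_def by (simp add: power2_eq_square mult_ac)
qed

end

lemma sum_fun_upd_coefficient:
  fixes x :: "'a \<times> 'b \<Rightarrow> real"
  assumes "finite S" "j0 \<in> S"
  shows "(\<Sum>j\<in>S. (x((r, j0) := y)) (r, j) * c j) = (\<Sum>j\<in>S. x (r, j) * c j) + (y - x (r, j0)) * c j0"
proof -
  have "(\<Sum>j\<in>S - {j0}. (x((r, j0) := y)) (r, j) * c j) = (\<Sum>j\<in>S - {j0}. x (r, j) * c j)"
    by (intro sum.cong) auto
  then show ?thesis
    using sum.remove[OF assms, of "\<lambda>j. (x((r, j0) := y)) (r, j) * c j"] sum.remove[OF assms, of "\<lambda>j. x (r, j) * c j"]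
    by (simp add: algebra_simps)
qed

lemma smoothed_latency_model_gen_lat:
  assumes "finite R" "1 \<le> n" "\<forall>i\<in>R \<times> {1..n}. smoothing_density \<phi> (f i)"
  shows "smoothed_latency_model n R (R \<times> {1..n}) f \<phi> gen_lat 1 {1..n} (\<lambda>r l. l)"
proof
  show "AE x in param_space (R \<times> {1..n}) f. \<forall>r\<in>R. \<forall>l\<in>{1..n}. 0 \<le> gen_lat x r l \<and> gen_lat x r l \<le> 1"
    using AE_param_space_unit_interval[of "R \<times> {1..n}", OF _ assms(3)] assms(1)
    by (simp add: gen_lat_def)
qed (use assms in \<open>auto simp: gen_lat_def measurable_param_space_component\<close>)

lemma poly_lat_bounds:
  assumes "\<forall>j\<le>dg r. 0 \<le> x (r, j) \<and> x (r, j) \<le> 1" "dg r \<le> d" "l \<in> {1..n}"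
  shows "0 \<le> poly_lat dg x r l \<and> poly_lat dg x r l \<le> real (d + 1) * real n ^ d"
proof
  show "0 \<le> poly_lat dg x r l" unfolding poly_lat_def using assms by (intro sum_nonneg) auto
  have "poly_lat dg x r l \<le> (\<Sum>j\<le>dg r. real n ^ d)"
    unfolding poly_lat_def
  proof (rule sum_mono)
    fix j assume "j \<in> {..dg r}"
    then have "x (r, j) * real l ^ j \<le> real l ^ j" "real l ^ j \<le> real n ^ d"
      using assms by (auto intro: mult_left_le_one_le order_trans[OF power_mono power_increasing])
    then show "x (r, j) * real l ^ j \<le> real n ^ d" by linarith
  qed
  also have "\<dots> \<le> real (d + 1) * real n ^ d"
    using assms(2) by (simp add: mult_right_mono)
  finally show "poly_lat dg x r l \<le> real (d + 1) * real n ^ d" .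
qed

lemma smoothed_latency_model_poly_lat:
  assumes "finite R" "1 \<le> n" "\<forall>r\<in>R. dg r \<le> d"
    and "\<forall>i\<in>{(r, j). r \<in> R \<and> j \<le> dg r}. smoothing_density \<phi> (f i)"
  shows "smoothed_latency_model n R {(r, j). r \<in> R \<and> j \<le> dg r} f \<phi> (poly_lat dg)
           (real (d + 1) * real n ^ d) {1..n} (\<lambda>r l. l)"
proof
  let ?I = "{(r, j). r \<in> R \<and> j \<le> dg r}"
  have "?I \<subseteq> R \<times> {..d}" using assms(3) by auto
  then show "finite ?I" by (rule finite_subset) (use assms(1) in simp)
  show "AE x in param_space ?I f. \<forall>r\<in>R. \<forall>l\<in>{1..n}.
      0 \<le> poly_lat dg x r l \<and> poly_lat dg x r l \<le> real (d + 1) * real n ^ d"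
    using AE_param_space_unit_interval[OF \<open>finite ?I\<close> assms(4)]
    by eventually_elim (use assms(3) poly_lat_bounds in fastforce)
  show "(\<forall>x. poly_lat dg x r l = 0) \<or> (\<exists>j. (r, j) \<in> ?I \<and>
      (\<forall>x y. poly_lat dg (x((r, j) := y)) r l = poly_lat dg x r l + (y - x (r, j))))" if "r \<in> R" for r l
  proof (intro disjI2 exI conjI allI)
    show "(r, 0) \<in> ?I" using that by simp
    show "poly_lat dg (x((r, 0) := y)) r l = poly_lat dg x r l + (y - x (r, 0))" for x y
      using sum_fun_upd_coefficient[of "{..dg r}" 0 x r y "\<lambda>j. real l ^ j"]
      unfolding poly_lat_def by simp
  qed
  show "(\<lambda>x. poly_lat dg x r l) \<in> borel_measurable (param_space ?I f)" if "r \<in> R" for r l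
    unfolding poly_lat_def using that
    by (intro borel_measurable_sum borel_measurable_times borel_measurable_const
        measurable_param_space_component) auto
  show "poly_lat dg (x(w := y)) r l = poly_lat dg x r l" if "fst w \<noteq> r" for r l x w y
    unfolding poly_lat_def using that by (intro sum.cong) auto
qed (use assms(2,4) in auto)

lemma initial_segment_eq_if_card_eq:
  fixes A :: "nat set"
  assumes "finite A" "card {j \<in> A. j \<le> l} = card {j \<in> A. j \<le> l'}"
  shows "{j \<in> A. j \<le> l} = {j \<in> A. j \<le> l'}"
proof -
  have "{j \<in> A. j \<le> min l l'} = {j \<in> A. j \<le> max l l'}"
    using assms by (intro card_subset_eq) (auto simp: max_def min_def split: if_splits)
  then show ?thesis by (auto simp: max_def min_def split: if_splits)
qed

lemma step_lat_bounds:
  assumes "\<forall>j\<in>Bp r. 0 \<le> x (r, j) \<and> x (r, j) \<le> 1" "finite (Bp r)" "card (Bp r) \<le> d"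
  shows "0 \<le> step_lat Bp x r l \<and> step_lat Bp x r l \<le> real d"
proof
  show "0 \<le> step_lat Bp x r l" unfolding step_lat_def using assms(1) by (intro sum_nonneg) auto
  have "step_lat Bp x r l \<le> (\<Sum>j\<in>{j \<in> Bp r. j \<le> l}. 1)"
    unfolding step_lat_def using assms(1) by (intro sum_mono) simp
  also have "\<dots> \<le> real (card (Bp r))" using assms(2) by (simp add: card_mono)
  also have "\<dots> \<le> real d" using assms(3) by simp
  finally show "step_lat Bp x r l \<le> real d" .
qed

lemma smoothed_latency_model_step_lat:
  assumes "finite R" "\<forall>r\<in>R. Bp r \<subseteq> {1..n} \<and> card (Bp r) \<le> d"
    and "\<forall>i\<in>{(r, j). r \<in> R \<and> j \<in> Bp r}. smoothing_density \<phi> (f i)"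
  shows "smoothed_latency_model n R {(r, j). r \<in> R \<and> j \<in> Bp r} f \<phi> (step_lat Bp)
           (real d) {0..d} (\<lambda>r l. card {j \<in> Bp r. j \<le> l})"
proof
  let ?I = "{(r, j). r \<in> R \<and> j \<in> Bp r}"
  have Bp: "finite (Bp r)" "card {j \<in> Bp r. j \<le> l} \<le> d" if "r \<in> R" for r l
  proof -
    show "finite (Bp r)" using assms(2) that by (meson finite_atLeastAtMost finite_subset)
    then have "card {j \<in> Bp r. j \<le> l} \<le> card (Bp r)" by (intro card_mono) auto
    moreover have "card (Bp r) \<le> d" using assms(2) that by simp
    ultimately show "card {j \<in> Bp r. j \<le> l} \<le> d" by linarith
  qed
  have "?I \<subseteq> R \<times> {1..n}" using assms(2) by auto
  then show "finite ?I" by (rule finite_subset) (use assms(1) in simp)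
  show "AE x in param_space ?I f. \<forall>r\<in>R. \<forall>l\<in>{1..n}.
      0 \<le> step_lat Bp x r l \<and> step_lat Bp x r l \<le> real d"
    using AE_param_space_unit_interval[OF \<open>finite ?I\<close> assms(3)]
  proof eventually_elim
    case (elim x)
    show ?case
      using elim assms(2) Bp(1) by (intro ballI step_lat_bounds) auto
  qed
  show "(\<forall>x. step_lat Bp x r l = 0) \<or> (\<exists>j. (r, j) \<in> ?I \<and>
      (\<forall>x y. step_lat Bp (x((r, j) := y)) r l = step_lat Bp x r l + (y - x (r, j))))" if "r \<in> R" for r l
  proof (cases "{j \<in> Bp r. j \<le> l} = {}")
    case False
    then obtain j0 where "j0 \<in> {j \<in> Bp r. j \<le> l}" by blast
    have "step_lat Bp (x((r, j0) := y)) r l = step_lat Bp x r l + (y - x (r, j0))" for x y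
      using sum_fun_upd_coefficient[of "{j \<in> Bp r. j \<le> l}" j0 x r y "\<lambda>_. 1"] Bp(1)[OF that] \<open>j0 \<in> _\<close>
      unfolding step_lat_def by simp
    moreover have "(r, j0) \<in> ?I" using that \<open>j0 \<in> _\<close> by simp
    ultimately show ?thesis by blast
  next
    case True
    then have "step_lat Bp x r l = 0" for x unfolding step_lat_def by (simp only: sum.empty)
    then show ?thesis by blast
  qed
  show "step_lat Bp x r l = step_lat Bp x r l'"
    if "r \<in> R" "card {j \<in> Bp r. j \<le> l} = card {j \<in> Bp r. j \<le> l'}" for r l l' x
    using initial_segment_eq_if_card_eq[OF Bp(1)[OF that(1)] that(2)] unfolding step_lat_def by simp
  show "(\<lambda>x. step_lat Bp x r l) \<in> borel_measurable (param_space ?I f)" if "r \<in> R" for r l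
    unfolding step_lat_def using that
    by (intro borel_measurable_sum measurable_param_space_component) auto
  show "step_lat Bp (x(w := y)) r l = step_lat Bp x r l" if "fst w \<noteq> r" for r l x w y
    unfolding step_lat_def using that by (intro sum.cong) auto
  show "card {j \<in> Bp r. j \<le> l} \<in> {0..d}" if "r \<in> R" for r l
    using Bp(2)[OF that] by simp
qed (use assms(3) in auto)

lemma max_br_steps_no_players: "max_br_steps 0 \<Sigma> \<kappa> = 0"
proof -
  have "{L. \<exists>p. is_profile 0 \<Sigma> (p 0) \<and> (\<forall>t<L. better_response_step 0 \<Sigma> \<kappa> (p t) (p (Suc t)))} = {0}"
    unfolding better_response_step_def is_profile_def by auto
  then show ?thesis unfolding max_br_steps_def by simp
qed

lemma smoothing_density_max_zero:
  assumes "smoothing_density \<phi> g"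
  shows "smoothing_density (max \<phi> 0) g"
  using assms unfolding smoothing_density_def by (auto intro: le_max_iff_disj[THEN iffD2])

lemma ennreal_max_zero_mult_le:
  assumes "0 \<le> \<phi> \<Longrightarrow> \<phi> * X \<le> Y"
  shows "ennreal (max \<phi> 0 * X) \<le> ennreal Y"
  using assms by (cases "0 \<le> \<phi>") (auto intro: ennreal_leI)

lemma real_le_square_mult:
  assumes "1 \<le> x"
  shows "real m \<le> real m ^ 2 * x"
proof (cases "m = 0")
  case False
  then have "1 * 1 \<le> real m * x" using assms by (intro mult_mono) auto
  then have "real m * 1 \<le> real m * (real m * x)" by (intro mult_left_mono) auto
  then show ?thesis by (simp add: power2_eq_square mult.assoc)
qed simp

lemma mult_one_plus_mult_ln_le:
  assumes "1 \<le> n"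
  shows "real m * (1 + real m * ln (real n + 1)) \<le> 2 * real m ^ 2 * real n"
proof -
  have "ln (real n + 1) \<le> real n" using ln_le_minus_one[of "real n + 1"] by simp
  then have "real m ^ 2 * ln (real n + 1) \<le> real m ^ 2 * real n" by (intro mult_left_mono) auto
  moreover have "real m \<le> real m ^ 2 * real n" using assms by (intro real_le_square_mult) simp
  ultimately show ?thesis by (simp add: power2_eq_square algebra_simps)
qed

lemma mult_one_plus_mult_ln_le_ln:
  assumes "2 \<le> n"
  shows "real m * (1 + real m * ln (real n + 1)) \<le> 4 * real m ^ 2 * ln (real n)"
proof -
  have "2 * n \<le> n * n" using assms by (intro mult_right_mono) auto
  then have "n + 1 \<le> n ^ 2" using assms unfolding power2_eq_square by linarith
  then have "real (n + 1) \<le> real (n ^ 2)" by (rule of_nat_mono)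
  then have "real n + 1 \<le> real n ^ 2" by simp
  then have "ln (real n + 1) \<le> ln (real n ^ 2)" using assms by simp
  also have "\<dots> = 2 * ln (real n)" using assms by (simp add: ln_realpow)
  finally have "real m ^ 2 * ln (real n + 1) \<le> real m ^ 2 * (2 * ln (real n))" by (intro mult_left_mono) auto
  moreover have "ln 2 \<le> ln (real n)" using assms by simp
  then have "real m \<le> real m ^ 2 * (2 * ln (real n))"
    using ln2_ge_two_thirds by (intro real_le_square_mult) simp
  ultimately show ?thesis by (simp add: power2_eq_square algebra_simps)
qed

lemma expected_max_br_steps_gen_lat_le:
  assumes "congestion_game n R \<Sigma>" "restrained n \<Sigma> B"
    and "\<forall>i\<in>R \<times> {1..n}. smoothing_density \<phi> (f i)"
  shows "(\<integral>\<^sup>+x. max_br_steps n \<Sigma> (gen_lat x) \<partial>param_space (R \<times> {1..n}) f)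
    \<le> ennreal (2 * real n ^ (B + 3) * real (max_strat n \<Sigma>) ^ 2 * real (card R) ^ 2 * \<phi>)"
proof (cases "n = 0")
  case True
  then show ?thesis by (simp add: max_br_steps_no_players)
next
  case False
  let ?k = "real (max_strat n \<Sigma>)" and ?m = "real (card R)"
  have "finite R" using assms(1) unfolding congestion_game_def by simp
  interpret smoothed_latency_model n R "R \<times> {1..n}" f "max \<phi> 0" gen_lat 1 "{1..n}" "\<lambda>r l. l"
    using False assms(3) \<open>finite R\<close>
    by (intro smoothed_latency_model_gen_lat) (auto intro: smoothing_density_max_zero)
  have "(\<integral>\<^sup>+x. max_br_steps n \<Sigma> (gen_lat x) \<partial>param_space (R \<times> {1..n}) f)
      \<le> ennreal (max \<phi> 0 * ((real n ^ (B + 2) * ?k ^ 2) * (?m * (1 + ?m * ln (real n + 1)))))"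
    using expected_max_br_steps_le[OF assms(1,2)] by (simp add: power_add power2_eq_square mult_ac)
  also have "\<dots> \<le> ennreal (2 * real n ^ (B + 3) * ?k ^ 2 * ?m ^ 2 * \<phi>)"
  proof (rule ennreal_max_zero_mult_le)
    assume "0 \<le> \<phi>"
    have "\<phi> * ((real n ^ (B + 2) * ?k ^ 2) * (?m * (1 + ?m * ln (real n + 1))))
        \<le> \<phi> * ((real n ^ (B + 2) * ?k ^ 2) * (2 * ?m ^ 2 * real n))"
      using \<open>0 \<le> \<phi>\<close> False mult_one_plus_mult_ln_le[of n "card R"]
      by (intro mult_left_mono) simp_all
    then show "\<phi> * ((real n ^ (B + 2) * ?k ^ 2) * (?m * (1 + ?m * ln (real n + 1))))
        \<le> 2 * real n ^ (B + 3) * ?k ^ 2 * ?m ^ 2 * \<phi>"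
      by (simp add: power_add eval_nat_numeral mult_ac)
  qed
  finally show ?thesis .
qed

lemma expected_max_br_steps_poly_lat_le:
  assumes "2 \<le> n" "congestion_game n R \<Sigma>" "restrained n \<Sigma> B" "\<forall>r\<in>R. dg r \<le> d"
    and "\<forall>i\<in>{(r, j). r \<in> R \<and> j \<le> dg r}. smoothing_density \<phi> (f i)"
  shows "(\<integral>\<^sup>+x. max_br_steps n \<Sigma> (poly_lat dg x) \<partial>param_space {(r, j). r \<in> R \<and> j \<le> dg r} f)
    \<le> ennreal (4 * real n ^ (B + d + 2) * ln (real n) * real (d + 1) ^ 3
                * real (max_strat n \<Sigma>) ^ 2 * real (card R) ^ 2 * \<phi>)"
proof -
  let ?k = "real (max_strat n \<Sigma>)" and ?m = "real (card R)"
  have "finite R" using assms(2) unfolding congestion_game_def by simp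
  interpret smoothed_latency_model n R "{(r, j). r \<in> R \<and> j \<le> dg r}" f "max \<phi> 0" "poly_lat dg"
      "real (d + 1) * real n ^ d" "{1..n}" "\<lambda>r l. l"
    using assms(1,4,5) \<open>finite R\<close>
    by (intro smoothed_latency_model_poly_lat) (auto intro: smoothing_density_max_zero)
  have "(\<integral>\<^sup>+x. max_br_steps n \<Sigma> (poly_lat dg x) \<partial>param_space {(r, j). r \<in> R \<and> j \<le> dg r} f)
      \<le> ennreal (max \<phi> 0 * ((real n ^ (B + d + 2) * ?k ^ 2 * real (d + 1)) * (?m * (1 + ?m * ln (real n + 1)))))"
    using expected_max_br_steps_le[OF assms(2,3)] by (simp add: power_add power2_eq_square mult_ac)
  also have "\<dots> \<le> ennreal (4 * real n ^ (B + d + 2) * ln (real n) * real (d + 1) ^ 3 * ?k ^ 2 * ?m ^ 2 * \<phi>)"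
  proof (rule ennreal_max_zero_mult_le)
    assume "0 \<le> \<phi>"
    have "0 \<le> ln (real n)" using assms(1) by simp
    have "\<phi> * ((real n ^ (B + d + 2) * ?k ^ 2 * real (d + 1)) * (?m * (1 + ?m * ln (real n + 1))))
        \<le> \<phi> * ((real n ^ (B + d + 2) * ?k ^ 2 * real (d + 1)) * (4 * ?m ^ 2 * ln (real n)))"
      using \<open>0 \<le> \<phi>\<close> mult_one_plus_mult_ln_le_ln[OF assms(1)] by (intro mult_left_mono) simp_all
    also have "\<dots> \<le> \<phi> * ((real n ^ (B + d + 2) * ?k ^ 2 * real (d + 1) ^ 3) * (4 * ?m ^ 2 * ln (real n)))"
      using \<open>0 \<le> \<phi>\<close> \<open>0 \<le> ln (real n)\<close>
      by (intro mult_left_mono mult_right_mono) (simp_all add: self_le_power)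
    finally show "\<phi> * ((real n ^ (B + d + 2) * ?k ^ 2 * real (d + 1)) * (?m * (1 + ?m * ln (real n + 1))))
        \<le> 4 * real n ^ (B + d + 2) * ln (real n) * real (d + 1) ^ 3 * ?k ^ 2 * ?m ^ 2 * \<phi>"
      by (simp add: mult_ac)
  qed
  finally show ?thesis .
qed

lemma expected_max_br_steps_step_lat_le:
  assumes "2 \<le> n" "congestion_game n R \<Sigma>" "restrained n \<Sigma> B"
    and "\<forall>r\<in>R. Bp r \<subseteq> {1..n} \<and> card (Bp r) \<le> d"
    and "\<forall>i\<in>{(r, j). r \<in> R \<and> j \<in> Bp r}. smoothing_density \<phi> (f i)"
  shows "(\<integral>\<^sup>+x. max_br_steps n \<Sigma> (step_lat Bp x) \<partial>param_space {(r, j). r \<in> R \<and> j \<in> Bp r} f)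
    \<le> ennreal (4 * real (d + 1) ^ (B + 2) * real n ^ 2 * ln (real n)
                * real (max_strat n \<Sigma>) ^ 2 * real (card R) ^ 2 * \<phi>)"
proof -
  let ?k = "real (max_strat n \<Sigma>)" and ?m = "real (card R)"
  have "finite R" using assms(2) unfolding congestion_game_def by simp
  interpret smoothed_latency_model n R "{(r, j). r \<in> R \<and> j \<in> Bp r}" f "max \<phi> 0" "step_lat Bp"
      "real d" "{0..d}" "\<lambda>r l. card {j \<in> Bp r. j \<le> l}"
    using assms(4,5) \<open>finite R\<close>
    by (intro smoothed_latency_model_step_lat) (auto intro: smoothing_density_max_zero)
  have "(\<integral>\<^sup>+x. max_br_steps n \<Sigma> (step_lat Bp x) \<partial>param_space {(r, j). r \<in> R \<and> j \<in> Bp r} f)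
      \<le> ennreal (max \<phi> 0 * ((real (d + 1) ^ B * real d * real n ^ 2 * ?k ^ 2) * (?m * (1 + ?m * ln (real n + 1)))))"
    using expected_max_br_steps_le[OF assms(2,3)] by (simp add: power2_eq_square mult_ac)
  also have "\<dots> \<le> ennreal (4 * real (d + 1) ^ (B + 2) * real n ^ 2 * ln (real n) * ?k ^ 2 * ?m ^ 2 * \<phi>)"
  proof (rule ennreal_max_zero_mult_le)
    assume "0 \<le> \<phi>"
    have "0 \<le> ln (real n)" using assms(1) by simp
    have "\<phi> * ((real (d + 1) ^ B * real d * real n ^ 2 * ?k ^ 2) * (?m * (1 + ?m * ln (real n + 1))))
        \<le> \<phi> * ((real (d + 1) ^ B * real d * real n ^ 2 * ?k ^ 2) * (4 * ?m ^ 2 * ln (real n)))"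
      using \<open>0 \<le> \<phi>\<close> mult_one_plus_mult_ln_le_ln[OF assms(1)] by (intro mult_left_mono) simp_all
    also have "\<dots> \<le> \<phi> * ((real (d + 1) ^ B * real (d + 1) ^ 2 * real n ^ 2 * ?k ^ 2) * (4 * ?m ^ 2 * ln (real n)))"
    proof -
      have "real d \<le> real (d + 1) ^ 2"
        using self_le_power[of "real (d + 1)" 2] by simp
      then show ?thesis using \<open>0 \<le> \<phi>\<close> \<open>0 \<le> ln (real n)\<close>
        by (intro mult_left_mono mult_right_mono) simp_all
    qed
    finally show "\<phi> * ((real (d + 1) ^ B * real d * real n ^ 2 * ?k ^ 2) * (?m * (1 + ?m * ln (real n + 1))))
        \<le> 4 * real (d + 1) ^ (B + 2) * real n ^ 2 * ln (real n) * ?k ^ 2 * ?m ^ 2 * \<phi>"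
      by (simp add: power_add power2_eq_square mult_ac)
  qed
  finally show ?thesis .
qed

theorem theorem4p2:
  shows
  "(\<exists>C::real. \<forall>n R \<Sigma> B \<phi> f.
      congestion_game n R \<Sigma> \<and> restrained n \<Sigma> B \<and>
      (\<forall>i\<in>R \<times> {1..n}. smoothing_density \<phi> (f i)) \<longrightarrow>
      (\<integral>\<^sup>+x. max_br_steps n \<Sigma> (gen_lat x) \<partial>param_space (R \<times> {1..n}) f)
        \<le> ennreal (C * real n ^ (B + 3) * real (max_strat n \<Sigma>) ^ 2 * real (card R) ^ 2 * \<phi>))
 \<and> (\<exists>C::real. \<forall>n R \<Sigma> B \<phi> f d dg.
      2 \<le> n \<and> congestion_game n R \<Sigma> \<and> restrained n \<Sigma> B \<and> (\<forall>r\<in>R. dg r \<le> d) \<and>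
      (\<forall>i\<in>{(r, j). r \<in> R \<and> j \<le> dg r}. smoothing_density \<phi> (f i)) \<longrightarrow>
      (\<integral>\<^sup>+x. max_br_steps n \<Sigma> (poly_lat dg x) \<partial>param_space {(r, j). r \<in> R \<and> j \<le> dg r} f)
        \<le> ennreal (C * real n ^ (B + d + 2) * ln (real n) * real (d + 1) ^ 3
                    * real (max_strat n \<Sigma>) ^ 2 * real (card R) ^ 2 * \<phi>))
 \<and> (\<exists>C::real. \<forall>n R \<Sigma> B \<phi> f d Bp.
      2 \<le> n \<and> congestion_game n R \<Sigma> \<and> restrained n \<Sigma> B \<and>
      (\<forall>r\<in>R. Bp r \<subseteq> {1..n} \<and> card (Bp r) \<le> d) \<and>
      (\<forall>i\<in>{(r, j). r \<in> R \<and> j \<in> Bp r}. smoothing_density \<phi> (f i)) \<longrightarrow>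
      (\<integral>\<^sup>+x. max_br_steps n \<Sigma> (step_lat Bp x) \<partial>param_space {(r, j). r \<in> R \<and> j \<in> Bp r} f)
        \<le> ennreal (C * real (d + 1) ^ (B + 2) * real n ^ 2 * ln (real n)
                    * real (max_strat n \<Sigma>) ^ 2 * real (card R) ^ 2 * \<phi>))"
  by (intro conjI exI allI impI; elim conjE)
    (rule expected_max_br_steps_gen_lat_le expected_max_br_steps_poly_lat_le
       expected_max_br_steps_step_lat_le; assumption)+

end
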